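(* Let $G$ be a countable infinite graph whose maximum degree $\Delta(G)$ is finite. Then $G$ has a proper $k$-total difference labeling for some positive integer $k$ (so $\chi_{td}(G)$ is defined). Moreover, if $M$ is the largest element of a minimal well-spaced row with $\Delta(G)^2+1$ elements, then $\chi_{td}(G)\leq M$.
   Context: For a (possibly infinite) simple graph $G$ and a positive integer $k$, a proper $k$-total difference labeling of $G$ is a function $f: V(G)\to\{1,\dots,k\}$, extended to edges by $f(\{u,v\}) = |f(u)-f(v)|$, such that: (i) adjacent vertices receive different labels; (ii) two distinct edges sharing a vertex receive different labels; (iii) no edge receives the same label as either of its endpoints. $\chi_{td}(G)$ denotes the smallest $k$ for which such a labeling exists. A well-spaced row is a finite set of positive integers such that no element is twice another element and no three distinct elements form an arithmetic progression. A minimal well-spaced row with $m$ elements is a well-spaced row of cardinality $m$ whose maximum element is as small as possible among all well-spaced rows of cardinality $m$. *)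

theory Defs
  imports Main "HOL-Library.Countable_Set"
begin

definition simple_graph :: "'a set \<Rightarrow> ('a \<Rightarrow> 'a \<Rightarrow> bool) \<Rightarrow> bool" where
  "simple_graph V E \<longleftrightarrow>
     (\<forall>u v. E u v \<longrightarrow> u \<in> V \<and> v \<in> V) \<and>
     (\<forall>u v. E u v \<longrightarrow> E v u) \<and>
     (\<forall>v. \<not> E v v)"

definition nbrs :: "('a \<Rightarrow> 'a \<Rightarrow> bool) \<Rightarrow> 'a \<Rightarrow> 'a set" where
  "nbrs E v = {u. E v u}"

definition finite_max_degree :: "'a set \<Rightarrow> ('a \<Rightarrow> 'a \<Rightarrow> bool) \<Rightarrow> bool" where
  "finite_max_degree V E \<longleftrightarrow>
     (\<exists>D::nat. \<forall>v\<in>V. finite (nbrs E v) \<and> card (nbrs E v) \<le> D)"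

text \<open>Maximum degree (meaningful when finite_max_degree holds).\<close>
definition max_degree :: "'a set \<Rightarrow> ('a \<Rightarrow> 'a \<Rightarrow> bool) \<Rightarrow> nat" where
  "max_degree V E = Sup ((\<lambda>v. card (nbrs E v)) ` V)"

definition elab :: "('a \<Rightarrow> nat) \<Rightarrow> 'a \<Rightarrow> 'a \<Rightarrow> int" where
  "elab f u v = \<bar>int (f u) - int (f v)\<bar>"

definition proper_total_diff_labeling ::
  "'a set \<Rightarrow> ('a \<Rightarrow> 'a \<Rightarrow> bool) \<Rightarrow> nat \<Rightarrow> ('a \<Rightarrow> nat) \<Rightarrow> bool" where
  "proper_total_diff_labeling V E k f \<longleftrightarrow>
     (\<forall>v\<in>V. f v \<in> {1..k}) \<and>
     (\<forall>u v. E u v \<longrightarrow> f u \<noteq> f v) \<and>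
     (\<forall>v u w. E v u \<longrightarrow> E v w \<longrightarrow> u \<noteq> w \<longrightarrow> elab f v u \<noteq> elab f v w) \<and>
     (\<forall>u v. E u v \<longrightarrow> elab f u v \<noteq> int (f u) \<and> elab f u v \<noteq> int (f v))"

definition chi_td :: "'a set \<Rightarrow> ('a \<Rightarrow> 'a \<Rightarrow> bool) \<Rightarrow> nat" where
  "chi_td V E = (LEAST k. 0 < k \<and> (\<exists>f. proper_total_diff_labeling V E k f))"

definition well_spaced_row :: "nat set \<Rightarrow> bool" where
  "well_spaced_row S \<longleftrightarrow>
     finite S \<and> (\<forall>x\<in>S. 0 < x) \<and>
     (\<forall>x\<in>S. \<forall>y\<in>S. x \<noteq> 2 * y) \<and>
     (\<forall>a\<in>S. \<forall>b\<in>S. \<forall>c\<in>S. a \<noteq> b \<and> b \<noteq> c \<and> a \<noteq> c \<longrightarrow> a + c \<noteq> 2 * b)"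

definition minimal_well_spaced_row :: "nat set \<Rightarrow> nat \<Rightarrow> bool" where
  "minimal_well_spaced_row S m \<longleftrightarrow>
     well_spaced_row S \<and> card S = m \<and>
     (\<forall>T. well_spaced_row T \<and> card T = m \<longrightarrow> Max S \<le> Max T)"

end

theory Submission
  imports Defs
begin

text \<open>Give distinct labels to any two vertices at distance at most two, using only labels
  from a well-spaced row S. Then adjacent vertices get different labels; the two edges
  vu and vw at v get labels |f v - f u| and |f v - f w|, which could only coincide if
  f u, f v, f w were an arithmetic progression; and an edge label |f u - f v| can only
  equal f u or f v if one endpoint label is twice the other. Such labels exist by greedy
  colouring along an enumeration of the countable vertex set: a vertex has at most
  \<Delta>^2 vertices within distance two, so a row with \<Delta>^2 + 1 elements always
  leaves a free label. The powers 1, 3, ..., 3^(\<Delta>^2) form such a row, so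
  chi_td is defined. The argument never uses that the vertex set is infinite.\<close>

text \<open>The colours of 0, ..., n - 1 are built as a list so that each choice depends only on
  earlier ones by structural recursion.\<close>

fun greedy_prefix :: "(nat \<Rightarrow> nat \<Rightarrow> bool) \<Rightarrow> 'b set \<Rightarrow> nat \<Rightarrow> 'b list" where
  "greedy_prefix R S 0 = []"
| "greedy_prefix R S (Suc n) =
     greedy_prefix R S n @ [SOME c. c \<in> S \<and> (\<forall>m<n. R m n \<longrightarrow> greedy_prefix R S n ! m \<noteq> c)]"

definition greedy_colouring :: "(nat \<Rightarrow> nat \<Rightarrow> bool) \<Rightarrow> 'b set \<Rightarrow> nat \<Rightarrow> 'b" where
  "greedy_colouring R S n = greedy_prefix R S (Suc n) ! n"

lemma length_greedy_prefix [simp]: "length (greedy_prefix R S n) = n"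
  by (induction n) auto

lemma nth_greedy_prefix: "m < n \<Longrightarrow> greedy_prefix R S n ! m = greedy_colouring R S m"
  by (induction n) (auto simp: greedy_colouring_def nth_append less_Suc_eq)

lemma greedy_colouring_eq:
  "greedy_colouring R S n = (SOME c. c \<in> S \<and> (\<forall>m<n. R m n \<longrightarrow> greedy_colouring R S m \<noteq> c))"
  unfolding greedy_colouring_def[of R S n] by (simp add: nth_append nth_greedy_prefix)

lemma greedy_colouring_proper:
  assumes "finite S" and "\<And>n. card {m. m < n \<and> R m n} < card S"
  shows "greedy_colouring R S n \<in> S \<and>
         (\<forall>m<n. R m n \<longrightarrow> greedy_colouring R S m \<noteq> greedy_colouring R S n)"
proof -
  let ?used = "greedy_colouring R S ` {m. m < n \<and> R m n}"
  have "card ?used < card S"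
    using card_image_le[of "{m. m < n \<and> R m n}" "greedy_colouring R S"] assms(2)[of n]
    by simp
  then have "\<not> S \<subseteq> ?used"
    using card_mono[of ?used S] by fastforce
  then have "\<exists>c. c \<in> S \<and> (\<forall>m<n. R m n \<longrightarrow> greedy_colouring R S m \<noteq> c)"
    by blast
  from someI_ex[OF this] show ?thesis
    by (subst (1 2) greedy_colouring_eq) simp
qed

lemma countable_greedy_colouring:
  fixes R :: "'a \<Rightarrow> 'a \<Rightarrow> bool" and S :: "'b set"
  assumes "countable V" and "finite S"
    and sym: "\<And>u v. R u v \<Longrightarrow> R v u" and irrefl: "\<And>v. \<not> R v v"
    and fin: "\<And>v. v \<in> V \<Longrightarrow> finite {u \<in> V. R u v}"
    and few: "\<And>v. v \<in> V \<Longrightarrow> card {u \<in> V. R u v} < card S"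
  shows "\<exists>c. (\<forall>v\<in>V. c v \<in> S) \<and> (\<forall>u\<in>V. \<forall>v\<in>V. R u v \<longrightarrow> c u \<noteq> c v)"
proof (cases "V = {}")
  case False
  then obtain v\<^sub>0 where "v\<^sub>0 \<in> V" by blast
  then have S_ne: "0 < card S" using few by fastforce
  let ?h = "to_nat_on V"
  have inj: "inj_on ?h V" using \<open>countable V\<close> by (rule inj_on_to_nat_on)
  define R' where "R' m n \<longleftrightarrow> (\<exists>u\<in>V. \<exists>v\<in>V. m = ?h u \<and> n = ?h v \<and> R u v)" for m n
  have "card {m. m < n \<and> R' m n} < card S" for n
  proof (cases "\<exists>v\<in>V. n = ?h v")
    case True
    then obtain v where v: "v \<in> V" "n = ?h v" by blast
    have "{m. m < n \<and> R' m n} \<subseteq> ?h ` {u \<in> V. R u v}"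
      using v inj by (auto simp: R'_def inj_on_eq_iff)
    then have "card {m. m < n \<and> R' m n} \<le> card (?h ` {u \<in> V. R u v})"
      using fin[OF v(1)] by (intro card_mono) simp_all
    also have "\<dots> \<le> card {u \<in> V. R u v}" using fin[OF v(1)] by (rule card_image_le)
    also have "\<dots> < card S" using few[OF v(1)] .
    finally show ?thesis .
  next
    case False
    then show ?thesis using S_ne by (simp add: R'_def)
  qed
  note proper = greedy_colouring_proper[OF \<open>finite S\<close> this]
  define c where "c v = greedy_colouring R' S (?h v)" for v
  have "c v \<in> S" for v using proper unfolding c_def by blast
  moreover have "c u \<noteq> c v" if "u \<in> V" "v \<in> V" "R u v" for u v
  proof -
    have "?h u \<noteq> ?h v" using that irrefl inj unfolding inj_on_def by metis
    then consider "?h u < ?h v" | "?h v < ?h u" by linarith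
    then show ?thesis
    proof cases
      case 1
      have "R' (?h u) (?h v)" using that unfolding R'_def by blast
      then show ?thesis using proper[of "?h v"] 1 unfolding c_def by blast
    next
      case 2
      have "R' (?h v) (?h u)" using that sym unfolding R'_def by blast
      then show ?thesis using proper[of "?h u"] 2 unfolding c_def by metis
    qed
  qed
  ultimately show ?thesis by blast
qed simp

definition within_two :: "('a \<Rightarrow> 'a \<Rightarrow> bool) \<Rightarrow> 'a \<Rightarrow> 'a \<Rightarrow> bool" where
  "within_two E u v \<longleftrightarrow> u \<noteq> v \<and> (E u v \<or> (\<exists>w. E u w \<and> E w v))"

lemma within_two_sym: "simple_graph V E \<Longrightarrow> within_two E u v \<Longrightarrow> within_two E v u"
  unfolding within_two_def simple_graph_def by blast

lemma card_nbrs_le_max_degree: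
  assumes "finite_max_degree V E" and "v \<in> V"
  shows "finite (nbrs E v)" and "card (nbrs E v) \<le> max_degree V E"
proof -
  obtain D where D: "\<forall>v\<in>V. finite (nbrs E v) \<and> card (nbrs E v) \<le> D"
    using assms(1) unfolding finite_max_degree_def by blast
  then show "finite (nbrs E v)" using assms(2) by blast
  have "bdd_above ((\<lambda>v. card (nbrs E v)) ` V)"
    using D by (auto simp: bdd_above_def)
  then show "card (nbrs E v) \<le> max_degree V E"
    unfolding max_degree_def using assms(2) by (simp add: cSup_upper)
qed

lemma card_within_two_le:
  assumes sg: "simple_graph V E" and fd: "finite_max_degree V E" and v: "v \<in> V"
  shows "finite {u. within_two E u v}" and "card {u. within_two E u v} \<le> (max_degree V E)\<^sup>2"
proof -
  let ?d = "max_degree V E"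
  let ?N2 = "\<Union>w\<in>nbrs E v. nbrs E w - {v}"
  have sub: "{u. within_two E u v} \<subseteq> nbrs E v \<union> ?N2"
    using sg unfolding within_two_def nbrs_def simple_graph_def by blast
  note Nv = card_nbrs_le_max_degree[OF fd v]
  have Nw: "finite (nbrs E w - {v})" "card (nbrs E w - {v}) \<le> ?d - 1" if "w \<in> nbrs E v" for w
  proof -
    have "w \<in> V" "v \<in> nbrs E w" using that sg unfolding simple_graph_def nbrs_def by blast+
    then show "finite (nbrs E w - {v})" "card (nbrs E w - {v}) \<le> ?d - 1"
      using card_nbrs_le_max_degree[OF fd \<open>w \<in> V\<close>] by auto
  qed
  have fin_N2: "finite ?N2" using Nv Nw by blast
  have "card ?N2 \<le> (\<Sum>w\<in>nbrs E v. card (nbrs E w - {v}))"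
    by (rule card_UN_le[OF Nv(1)])
  also have "\<dots> \<le> card (nbrs E v) * (?d - 1)"
    using sum_mono[of "nbrs E v" "\<lambda>w. card (nbrs E w - {v})" "\<lambda>_. ?d - 1"] Nw by simp
  also have "\<dots> \<le> ?d * (?d - 1)" using Nv(2) by simp
  finally have card_N2: "card ?N2 \<le> ?d * (?d - 1)" .
  show "finite {u. within_two E u v}" using sub Nv(1) fin_N2 finite_subset by blast
  have "card {u. within_two E u v} \<le> card (nbrs E v \<union> ?N2)"
    using sub Nv(1) fin_N2 by (intro card_mono) auto
  also have "\<dots> \<le> card (nbrs E v) + card ?N2" by (rule card_Un_le)
  also have "\<dots> \<le> ?d + ?d * (?d - 1)" using Nv(2) card_N2 by simp
  also have "\<dots> = ?d\<^sup>2" by (cases ?d) (auto simp: power2_eq_square)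
  finally show "card {u. within_two E u v} \<le> ?d\<^sup>2" .
qed

lemma proper_total_diff_labeling_from_well_spaced_row:
  assumes sg: "simple_graph V E" and ws: "well_spaced_row S"
    and f_S: "\<And>v. v \<in> V \<Longrightarrow> f v \<in> S"
    and f_dist: "\<And>u v. u \<in> V \<Longrightarrow> v \<in> V \<Longrightarrow> within_two E u v \<Longrightarrow> f u \<noteq> f v"
  shows "proper_total_diff_labeling V E (Max S) f"
proof -
  have EV: "u \<in> V" "v \<in> V" "u \<noteq> v" "E v u" if "E u v" for u v
    using that sg unfolding simple_graph_def by metis+
  have pos: "0 < x" and le_Max: "x \<le> Max S" if "x \<in> S" for x
    using that ws unfolding well_spaced_row_def by auto
  have no_double: "x \<noteq> 2 * y" if "x \<in> S" "y \<in> S" for x y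
    using that ws unfolding well_spaced_row_def by blast
  have no_ap: "a + c \<noteq> 2 * b" if "a \<in> S" "b \<in> S" "c \<in> S" "a \<noteq> b" "b \<noteq> c" "a \<noteq> c" for a b c
    using that ws unfolding well_spaced_row_def by blast
  have adj: "f u \<noteq> f v" if "E u v" for u v
    using that EV[OF that] f_dist unfolding within_two_def by blast
  have at_vertex: "elab f v u \<noteq> elab f v w" if "E v u" "E v w" "u \<noteq> w" for v u w
  proof -
    have "within_two E u w" using that EV unfolding within_two_def by blast
    then have "f u \<noteq> f w" using that EV f_dist by blast
    moreover have "f u + f w \<noteq> 2 * f v"
      using no_ap adj that EV f_S \<open>f u \<noteq> f w\<close> by metis
    ultimately show ?thesis unfolding elab_def by linarith
  qed
  have on_edge: "elab f u v \<noteq> int (f u) \<and> elab f u v \<noteq> int (f v)" if "E u v" for u v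
    using no_double[of "f u" "f v"] no_double[of "f v" "f u"] pos f_S EV[OF that]
    unfolding elab_def by fastforce
  have "f v \<in> {1..Max S}" if "v \<in> V" for v
    using pos le_Max f_S that by (simp add: Suc_le_eq)
  then show ?thesis
    unfolding proper_total_diff_labeling_def using adj at_vertex on_edge by blast
qed

lemma proper_total_diff_labeling_exists:
  assumes sg: "simple_graph V E" and "countable V" and fd: "finite_max_degree V E"
    and ws: "well_spaced_row S" and card_S: "(max_degree V E)\<^sup>2 < card S"
  shows "\<exists>f. proper_total_diff_labeling V E (Max S) f"
proof -
  have "finite S" using ws unfolding well_spaced_row_def by blast
  have "card {u \<in> V. within_two E u v} < card S" if "v \<in> V" for v
    using card_within_two_le[OF sg fd that] card_S
    by (metis (no_types, lifting) card_mono mem_Collect_eq order.strict_trans1 subsetI)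
  moreover have "finite {u \<in> V. within_two E u v}" if "v \<in> V" for v
    using card_within_two_le(1)[OF sg fd that] by simp
  moreover have "\<not> within_two E v v" for v by (simp add: within_two_def)
  ultimately obtain f where "\<forall>v\<in>V. f v \<in> S"
    and "\<forall>u\<in>V. \<forall>v\<in>V. within_two E u v \<longrightarrow> f u \<noteq> f v"
    using countable_greedy_colouring[OF \<open>countable V\<close> \<open>finite S\<close>, of "within_two E"]
      within_two_sym[OF sg] by blast
  then show ?thesis
    using proper_total_diff_labeling_from_well_spaced_row[OF sg ws] by blast
qed

lemma Max_well_spaced_row_pos: "well_spaced_row S \<Longrightarrow> S \<noteq> {} \<Longrightarrow> 0 < Max S"
  unfolding well_spaced_row_def by simp

lemma three_power_not_midpoint:
  fixes a b c :: nat
  assumes "a \<noteq> b" "b \<noteq> c"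
  shows "3 ^ a + 3 ^ c \<noteq> (2::nat) * 3 ^ b"
proof (cases "b < a \<or> b < c")
  case True
  then obtain x where x: "x = a \<or> x = c" "Suc b \<le> x" by (blast intro: Suc_leI)
  then have "3 * 3 ^ b \<le> (3::nat) ^ x"
    using power_increasing[of "Suc b" x "3::nat"] by simp
  moreover have "0 < (3::nat) ^ b" by simp
  ultimately show ?thesis using x(1) by (elim disjE; hypsubst; linarith)
next
  case False
  then obtain k where k: "b = Suc k" "a \<le> k" "c \<le> k"
    using assms by (cases b) auto
  then have "(3::nat) ^ a \<le> 3 ^ k" "(3::nat) ^ c \<le> 3 ^ k"
    by (simp_all add: power_increasing)
  then have "(3::nat) ^ a + 3 ^ c \<le> 2 * 3 ^ k" by linarith
  moreover have "(2::nat) * 3 ^ k < 2 * 3 ^ b" using k(1) by simp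
  ultimately show ?thesis by linarith
qed

lemma well_spaced_row_powers_of_three:
  "well_spaced_row ((\<lambda>i. (3::nat) ^ i) ` {..<m})"
proof -
  have "(3::nat) ^ i \<noteq> 2 * 3 ^ j" for i j
    by (metis dvd_triv_left even_power odd_numeral)
  then show ?thesis
    unfolding well_spaced_row_def using three_power_not_midpoint by auto
qed

lemma card_powers_of_three: "card ((\<lambda>i. (3::nat) ^ i) ` {..<m}) = m"
  by (simp add: card_image inj_on_def)

theorem mainTheorem7:
  fixes V :: "'a set" and E :: "'a \<Rightarrow> 'a \<Rightarrow> bool"
  assumes "simple_graph V E"
    and "countable V" and "infinite V"
    and "finite_max_degree V E"
  shows "(\<exists>k::nat. 0 < k \<and> (\<exists>f. proper_total_diff_labeling V E k f)) \<and>
         (\<forall>S. minimal_well_spaced_row S ((max_degree V E)^2 + 1) \<longrightarrow> chi_td V E \<le> Max S)"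
proof -
  have labeling: "0 < Max S \<and> (\<exists>f. proper_total_diff_labeling V E (Max S) f)"
    if "well_spaced_row S" "card S = (max_degree V E)^2 + 1" for S
    using proper_total_diff_labeling_exists[OF assms(1,2,4) that(1)] that
      Max_well_spaced_row_pos by fastforce
  have "(\<exists>k::nat. 0 < k \<and> (\<exists>f. proper_total_diff_labeling V E k f))"
    using labeling[OF well_spaced_row_powers_of_three card_powers_of_three] by blast
  moreover have "chi_td V E \<le> Max S"
    if "minimal_well_spaced_row S ((max_degree V E)^2 + 1)" for S
    using that labeling unfolding minimal_well_spaced_row_def chi_td_def by (blast intro: Least_le)
  ultimately show ?thesis by blast
qed

end
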